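(* Let $H\in\mathbb R^{n\times n}$, $f\in\mathbb R^n$, $A\in\mathbb R^{m\times n}$, $b\in\mathbb R^m$, with $\mathcal X=\{x\in\mathbb R^n: Ax\le b\}$ nonempty and $H+H^\top$ positive definite. Let $x^*$ be the unique solution of the affine variational inequality: find $x\in\mathcal X$ with $(Hx+f)^\top(y-x)\ge0$ for all $y\in\mathcal X$, and let $\mathcal A=\{i\in\{1,\dots,m\}: A_ix^*=b_i\}$. Assume (LICQ) the rows of $A_{\mathcal A}$ are linearly independent, so that there is a unique $\lambda^*\in\mathbb R^m$ with $Hx^*+f+A^\top\lambda^*=0$ and $0\le\lambda^*\perp b-Ax^*\ge0$; and assume (strict complementarity) $\lambda^*_i>0$ for all $i\in\mathcal A$. Then the DR-DAQP algorithm (described in the context) terminates after finitely many iterations, returning the exact solution $(x^*,\lambda^* )$ (with the returned multiplier understood as $\lambda^*_{\mathcal A}$, the remaining components being zero).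
   Context: Notation: $A_i$, $b_i$ denote the $i$-th row of $A$ and entry of $b$; for an index set $\mathcal S$, $A_{\mathcal S}$, $b_{\mathcal S}$, $\lambda_{\mathcal S}$ denote the corresponding submatrix/subvectors. Fix $\rho>0$, set $H_s=\tfrac12(H+H^\top)$, $\tilde H=\rho I+H_s$, and for $z\in\mathbb R^n$ let $\tilde f(z)=f+(H-\tilde H)z$. For a parameter $z$, let $\mathrm{QP}(z)$ denote the strictly convex quadratic program $\min_x \tfrac12 x^\top\tilde Hx+\tilde f(z)^\top x$ subject to $Ax\le b$; its active set at the minimizer $y$ is $\{i: A_iy=b_i\}$. DR-DAQP algorithm: start from an initial $z_0\in\mathbb R^n$, set $\delta=\infty$, and let $\mathcal A_{-1}$ be undefined (so the test below fails at $k=0$). For $k=0,1,2,\dots$: 1. Let $y_k$ be the solution of $\mathrm{QP}(z_k)$ and $\mathcal A_k$ its active set. 2. If $\mathcal A_k=\mathcal A_{k-1}$: let $(\tilde z_k,\lambda_k)$ solve the linear system $\begin{bmatrix}H & A_{\mathcal A_k}^\top\\ A_{\mathcal A_k} & 0\end{bmatrix}\begin{bmatrix}x\\ \lambda\end{bmatrix}=\begin{bmatrix}-f\\ b_{\mathcal A_k}\end{bmatrix}$. If $\lambda_k\ge0$ and $A\tilde z_k\le b$, stop and return $(\tilde z_k,\lambda_k)$. Otherwise, let $\tilde y_k$ be the solution of $\mathrm{QP}(\tilde z_k)$ and redefine $\mathcal A_k$ as its active set; if $\|\tilde y_k-\tilde z_k\|<\delta$, replace $y_k\leftarrow\tilde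 y_k$, $z_k\leftarrow\tilde z_k$, and set $\delta\leftarrow\|\tilde y_k-\tilde z_k\|$. 3. Set $z_{k+1}=(\rho I+H)^{-1}\big(\rho y_k+Hz_k+\tfrac{1}{2}H_s(y_k-z_k)\big)$. The algorithm iterates indefinitely unless it stops in step 2. *)

theory Defs
  imports "HOL-Analysis.Analysis" "HOL-Library.Extended_Real"
begin

definition feasible :: "real^'n^'m \<Rightarrow> real^'m \<Rightarrow> (real^'n) set" where
  "feasible A b = {x. \<forall>i. (A $ i) \<bullet> x \<le> b $ i}"

definition active_set :: "real^'n^'m \<Rightarrow> real^'m \<Rightarrow> real^'n \<Rightarrow> 'm set" where
  "active_set A b y = {i. (A $ i) \<bullet> y = b $ i}"

definition Hsym :: "real^'n^'n \<Rightarrow> real^'n^'n" where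
  "Hsym H = (1/2) *\<^sub>R (H + transpose H)"

definition Htil :: "real \<Rightarrow> real^'n^'n \<Rightarrow> real^'n^'n" where
  "Htil \<rho> H = \<rho> *\<^sub>R mat 1 + Hsym H"

definition ftil :: "real \<Rightarrow> real^'n^'n \<Rightarrow> real^'n \<Rightarrow> real^'n \<Rightarrow> real^'n" where
  "ftil \<rho> H f z = f + (H - Htil \<rho> H) *v z"

definition qp_obj :: "real \<Rightarrow> real^'n^'n \<Rightarrow> real^'n \<Rightarrow> real^'n \<Rightarrow> real^'n \<Rightarrow> real" where
  "qp_obj \<rho> H f z x = (1/2) * (x \<bullet> (Htil \<rho> H *v x)) + ftil \<rho> H f z \<bullet> x"

definition qp_sol :: "real \<Rightarrow> real^'n^'n \<Rightarrow> real^'n \<Rightarrow> real^'n^'m \<Rightarrow> real^'m \<Rightarrow> real^'n \<Rightarrow> real^'n" where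
  "qp_sol \<rho> H f A b z =
     (THE y. y \<in> feasible A b \<and> (\<forall>x\<in>feasible A b. qp_obj \<rho> H f z y \<le> qp_obj \<rho> H f z x))"

text \<open>(x, lam) solves the equality-constrained KKT system for index set S:
  [H A_S^T; A_S 0] [x; lam_S] = [-f; b_S], with lam represented as a vector in R^m
  whose components outside S are zero.\<close>
definition kkt_sol :: "real^'n^'n \<Rightarrow> real^'n \<Rightarrow> real^'n^'m \<Rightarrow> real^'m \<Rightarrow> 'm set
    \<Rightarrow> (real^'n) \<times> (real^'m) \<Rightarrow> bool" where
  "kkt_sol H f A b S p \<longleftrightarrow>
     (let x = fst p; lam = snd p in
       (\<forall>i. i \<notin> S \<longrightarrow> lam $ i = 0) \<and>
       H *v x + transpose A *v lam = - f \<and>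
       (\<forall>i\<in>S. (A $ i) \<bullet> x = b $ i))"

text \<open>Algorithm state: (z_k, A_{k-1} (None = undefined), delta).\<close>
type_synonym ('n, 'm) dr_state = "(real^'n) \<times> 'm set option \<times> ereal"

text \<open>The parameter sel k S gives the solution of the linear
  system chosen at iteration k for active set S. Result: Inl (x, lam) = stop and return;
  Inr s = continue with state s.\<close>
definition dr_step :: "real \<Rightarrow> real^'n^'n \<Rightarrow> real^'n \<Rightarrow> real^'n^'m \<Rightarrow> real^'m
    \<Rightarrow> (nat \<Rightarrow> 'm set \<Rightarrow> (real^'n) \<times> (real^'m)) \<Rightarrow> nat \<Rightarrow> ('n, 'm) dr_state
    \<Rightarrow> ((real^'n) \<times> (real^'m)) + ('n, 'm) dr_state" where
  "dr_step \<rho> H f A b sel k s =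
    (let (z, prevA, \<delta>) = s;
         y = qp_sol \<rho> H f A b z;
         Ak = active_set A b y;
         z3 = (\<lambda>y z. matrix_inv (\<rho> *\<^sub>R mat 1 + H) *v
                 (\<rho> *\<^sub>R y + H *v z + (1/2) *\<^sub>R (Hsym H *v (y - z))))
     in if prevA = Some Ak then
          (let (zt, lam) = sel k Ak in
           if (\<forall>i. lam $ i \<ge> 0) \<and> zt \<in> feasible A b then Inl (zt, lam)
           else
             (let yt = qp_sol \<rho> H f A b zt;
                  Ak' = active_set A b yt
              in if ereal (norm (yt - zt)) < \<delta>
                 then Inr (z3 yt zt, Some Ak', ereal (norm (yt - zt)))
                 else Inr (z3 y z, Some Ak', \<delta>)))
        else Inr (z3 y z, Some Ak, \<delta>))"

text \<open>Run of the algorithm: status before iteration k.\<close>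
fun dr_run :: "real \<Rightarrow> real^'n^'n \<Rightarrow> real^'n \<Rightarrow> real^'n^'m \<Rightarrow> real^'m
    \<Rightarrow> (nat \<Rightarrow> 'm set \<Rightarrow> (real^'n) \<times> (real^'m)) \<Rightarrow> real^'n \<Rightarrow> nat
    \<Rightarrow> ((real^'n) \<times> (real^'m)) + ('n, 'm) dr_state" where
  "dr_run \<rho> H f A b sel z0 0 = Inr (z0, None, \<infinity>)"
| "dr_run \<rho> H f A b sel z0 (Suc k) =
     (case dr_run \<rho> H f A b sel z0 k of
        Inl r \<Rightarrow> Inl r
      | Inr s \<Rightarrow> dr_step \<rho> H f A b sel k s)"

end

(*
  With R = rho I + H, T = rho I + H_s/2 and e = z - xstar, the update of step 3 satisfies
  R e_new = R e + T (y - z).  Adding the variational inequality of QP(z) at y to that of the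
  AVI at xstar shows that V(e) = (R e) . T^-1 (R e) decreases by at least
  rho |y - z|^2 + e . H e.

  Since the primal part of a KKT solution is unique, the threshold delta ranges over finitely
  many values and strictly decreases whenever the iterate is replaced, so eventually only the
  plain update is performed.  Then z_k and y_k both converge to xstar.  For i in the optimal
  active set, LICQ yields a direction d with A_i d = 1 and A_j d = 0 for the other active j,
  along which the limiting gradient H xstar + f has slope -lamstar_i < 0; so for large k the
  constraint i must be active at y_k, and the active set of y_k is eventually the optimal one.
  Two equal consecutive active sets trigger the KKT solve on that set, whose unique solution
  is (xstar, lamstar), so the algorithm stops.  Conversely any returned point is a primal and
  dual feasible KKT point, hence solves the AVI and equals (xstar, lamstar) by LICQ.
*)
theory Submission
  imports Defs
begin

declare transpose_matrix_vector [simp del]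

section \<open>Matrices and quadratic forms\<close>

lemma matrix_inv_mult_vec:
  fixes M :: "real^'n^'n"
  assumes "invertible M"
  shows "M *v (matrix_inv M *v v) = v" and "matrix_inv M *v (M *v v) = v"
proof -
  have "\<exists>M'. M ** M' = mat 1 \<and> M' ** M = mat 1"
    using assms unfolding invertible_def by blast
  then have "M ** matrix_inv M = mat 1 \<and> matrix_inv M ** M = mat 1"
    unfolding matrix_inv_def by (rule someI_ex)
  then show "M *v (matrix_inv M *v v) = v" and "matrix_inv M *v (M *v v) = v"
    by (simp_all add: matrix_vector_mul_assoc)
qed

lemma invertible_if_pos_quadratic:
  fixes M :: "real^'n^'n"
  assumes "\<And>x. x \<noteq> 0 \<Longrightarrow> 0 < x \<bullet> (M *v x)"
  shows "invertible M"
proof -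
  have "inj ((*v) M)"
  proof (rule injI)
    fix x y assume "M *v x = M *v y"
    then have "M *v (x - y) = 0" by (simp add: matrix_vector_mult_diff_distrib)
    then show "x = y" using assms[of "x - y"] by fastforce
  qed
  then show ?thesis using matrix_left_invertible_injective invertible_left_inverse by blast
qed

lemma continuous_on_matrix_vector_mult [continuous_intros]:
  fixes M :: "real^'n^'m"
  shows "continuous_on S f \<Longrightarrow> continuous_on S (\<lambda>x. M *v f x)"
  by (rule bounded_linear.continuous_on[OF matrix_vector_mul_bounded_linear])

lemma tendsto_matrix_vector_mult [tendsto_intros]:
  fixes M :: "real^'n^'m"
  shows "(X \<longlongrightarrow> x) F \<Longrightarrow> ((\<lambda>j. M *v X j) \<longlongrightarrow> M *v x) F"
  by (rule bounded_linear.tendsto[OF matrix_vector_mul_bounded_linear])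

lemma inner_matrix_vector_transpose:
  fixes M :: "real^'n^'m"
  shows "(M *v x) \<bullet> y = x \<bullet> (transpose M *v y)"
  by (metis dot_lmul_matrix inner_commute transpose_matrix_vector)

lemma inner_symmetric_matrix_vector:
  fixes M :: "real^'n^'n"
  assumes "transpose M = M"
  shows "(M *v x) \<bullet> y = x \<bullet> (M *v y)"
  using inner_matrix_vector_transpose[of M x y] assms by simp

lemma quadratic_transpose: "x \<bullet> (transpose M *v x) = x \<bullet> (M *v x)" for M :: "real^'n^'n"
  by (metis inner_matrix_vector_transpose inner_commute)

lemma quadratic_add_transpose: "x \<bullet> ((M + transpose M) *v x) = 2 * (x \<bullet> (M *v x))"
  for M :: "real^'n^'n"
  by (simp add: matrix_vector_mult_add_rdistrib inner_add_right quadratic_transpose)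

lemma transpose_add: "transpose (M + N) = transpose M + transpose (N :: real^'n^'n)"
  by (simp add: transpose_def vec_eq_iff)

lemma Hsym_transpose: "transpose (Hsym H) = Hsym H"
  unfolding Hsym_def by (simp add: transpose_scalar transpose_add add.commute)

lemma Hsym_quadratic: "x \<bullet> (Hsym H *v x) = x \<bullet> (H *v x)"
  unfolding Hsym_def
  by (simp add: scaleR_matrix_vector_assoc[symmetric] quadratic_add_transpose)

lemma Htil_mult_vec: "Htil \<rho> H *v x = \<rho> *\<^sub>R x + Hsym H *v x"
  unfolding Htil_def
  by (metis matrix_vector_mul_lid matrix_vector_mult_add_rdistrib scaleR_matrix_vector_assoc)

lemma Htil_transpose: "transpose (Htil \<rho> H) = Htil \<rho> H"
  unfolding Htil_def by (simp add: transpose_add transpose_scalar Hsym_transpose)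

lemma pos_quadratic_uniform:
  fixes M :: "real^'n^'n"
  assumes pos: "\<And>x. x \<noteq> 0 \<Longrightarrow> 0 < x \<bullet> (M *v x)"
  obtains \<mu> where "0 < \<mu>" and "\<And>x. \<mu> * (norm x)\<^sup>2 \<le> x \<bullet> (M *v x)"
proof -
  have cont: "continuous_on (sphere 0 1) (\<lambda>x::real^'n. x \<bullet> (M *v x))"
    by (intro continuous_intros)
  obtain u :: "real^'n" where "norm u = 1" using vector_choose_size[of 1] by auto
  then have "sphere (0::real^'n) 1 \<noteq> {}" by auto
  then obtain x0 where x0: "x0 \<in> sphere 0 1"
    and min: "\<And>x. x \<in> sphere 0 1 \<Longrightarrow> x0 \<bullet> (M *v x0) \<le> x \<bullet> (M *v x)"
    using continuous_attains_inf[OF compact_sphere _ cont] by blast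
  show thesis
  proof
    show "0 < x0 \<bullet> (M *v x0)" using x0 by (intro pos) auto
    fix x :: "real^'n"
    show "x0 \<bullet> (M *v x0) * (norm x)\<^sup>2 \<le> x \<bullet> (M *v x)"
    proof (cases "x = 0")
      case False
      then have "x0 \<bullet> (M *v x0) \<le> (x /\<^sub>R norm x) \<bullet> (M *v (x /\<^sub>R norm x))"
        by (intro min) simp
      also have "\<dots> = (x \<bullet> (M *v x)) / (norm x)\<^sup>2"
        by (simp add: matrix_vector_mult_scaleR power2_eq_square divide_inverse)
      finally show ?thesis using False by (simp add: field_simps)
    qed simp
  qed
qed

section \<open>Strongly convex quadratic programs\<close>

definition quad_fun :: "real^'n^'n \<Rightarrow> real^'n \<Rightarrow> real^'n \<Rightarrow> real" where
  "quad_fun Q c x = 1/2 * (x \<bullet> (Q *v x)) + c \<bullet> x"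

lemma qp_obj_eq_quad_fun: "qp_obj \<rho> H f z = quad_fun (Htil \<rho> H) (ftil \<rho> H f z)"
  by (simp add: fun_eq_iff qp_obj_def quad_fun_def)

lemma quad_fun_along_line:
  fixes Q :: "real^'n^'n"
  assumes "transpose Q = Q"
  shows "quad_fun Q c (y + t *\<^sub>R d)
           = quad_fun Q c y + t * ((Q *v y + c) \<bullet> d) + t\<^sup>2 / 2 * (d \<bullet> (Q *v d))"
proof -
  have "y \<bullet> (Q *v d) = (Q *v y) \<bullet> d"
    using inner_symmetric_matrix_vector[OF assms, of y d] by simp
  then show ?thesis
    unfolding quad_fun_def
    by (simp add: matrix_vector_right_distrib matrix_vector_mult_scaleR inner_add_left
        inner_add_right algebra_simps power2_eq_square inner_commute[of d "Q *v y"])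
qed

lemma closed_feasible: "closed (feasible A b)"
  and convex_feasible: "convex (feasible A b)"
proof -
  have "feasible A b = (\<Inter>i. {x. (A $ i) \<bullet> x \<le> b $ i})" unfolding feasible_def by auto
  then show "closed (feasible A b)" and "convex (feasible A b)"
    by (simp_all add: closed_INT closed_halfspace_le convex_INT convex_halfspace_le)
qed

lemma quad_fun_attains_min:
  fixes Q :: "real^'n^'n"
  assumes coercive: "\<And>d. r * (norm d)\<^sup>2 \<le> d \<bullet> (Q *v d)" and "0 < r"
    and "closed X" and "x0 \<in> X"
  shows "\<exists>y\<in>X. \<forall>x\<in>X. quad_fun Q c y \<le> quad_fun Q c x"
proof -
  define Rad where "Rad = max (norm x0) (max 1 ((2/r) * (norm c + \<bar>quad_fun Q c x0\<bar> + 1)))"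
  have far: "quad_fun Q c x0 < quad_fun Q c x" if "Rad < norm x" for x
  proof -
    have "1 \<le> norm x" and "norm c + \<bar>quad_fun Q c x0\<bar> + 1 < r/2 * norm x"
      using that \<open>0 < r\<close> by (auto simp: Rad_def field_simps)
    moreover have "- (norm c * norm x) \<le> c \<bullet> x"
      using Cauchy_Schwarz_ineq2[of c x] by linarith
    ultimately have "1 * (\<bar>quad_fun Q c x0\<bar> + 1) \<le> norm x * (r/2 * norm x - norm c)"
      by (intro mult_mono) auto
    also have "\<dots> \<le> quad_fun Q c x"
      using coercive[of x] \<open>- (norm c * norm x) \<le> c \<bullet> x\<close>
      unfolding quad_fun_def by (simp add: power2_eq_square algebra_simps)
    finally have "\<bar>quad_fun Q c x0\<bar> + 1 \<le> quad_fun Q c x" by simp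
    then show ?thesis using abs_ge_self[of "quad_fun Q c x0"] by linarith
  qed
  let ?K = "X \<inter> cball 0 Rad"
  have "compact ?K" using \<open>closed X\<close> by (simp add: closed_Int_compact)
  moreover have "x0 \<in> ?K" using \<open>x0 \<in> X\<close> by (auto simp: Rad_def)
  moreover have "continuous_on ?K (quad_fun Q c)"
    unfolding quad_fun_def by (intro continuous_intros)
  ultimately obtain y where y: "y \<in> ?K" and min: "\<And>x. x \<in> ?K \<Longrightarrow> quad_fun Q c y \<le> quad_fun Q c x"
    using continuous_attains_inf[of ?K "quad_fun Q c"] by blast
  show ?thesis
  proof (intro bexI ballI)
    show "y \<in> X" using y by simp
    fix x assume "x \<in> X"
    show "quad_fun Q c y \<le> quad_fun Q c x"
    proof (cases "norm x \<le> Rad")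
      case True
      then show ?thesis using min \<open>x \<in> X\<close> by simp
    next
      case False
      then show ?thesis using min[OF \<open>x0 \<in> ?K\<close>] far[of x] by simp
    qed
  qed
qed

lemma quad_fun_min_imp_vi:
  fixes Q :: "real^'n^'n"
  assumes sym: "transpose Q = Q" and psd: "\<And>d. 0 \<le> d \<bullet> (Q *v d)"
    and "convex X" and "y \<in> X" and min: "\<And>x. x \<in> X \<Longrightarrow> quad_fun Q c y \<le> quad_fun Q c x"
    and "x \<in> X"
  shows "0 \<le> (Q *v y + c) \<bullet> (x - y)"
proof (rule ccontr)
  let ?d = "x - y"
  let ?g = "(Q *v y + c) \<bullet> ?d" and ?q = "?d \<bullet> (Q *v ?d)"
  assume "\<not> ?thesis"
  then have g: "?g < 0" by simp
  have q: "0 \<le> ?q" by (rule psd)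
  define t where "t = min 1 (- ?g / (?q + 1))"
  have t: "0 < t" "t \<le> 1" using g q divide_neg_pos[of ?g "?q + 1"] by (auto simp: t_def)
  have "t * ?q \<le> (- ?g / (?q + 1)) * ?q" by (rule mult_right_mono[OF _ q]) (simp add: t_def)
  also have "\<dots> < - ?g" using g q by (simp add: field_simps)
  finally have tq: "t * ?q < - ?g" .
  have "y + t *\<^sub>R ?d = (1 - t) *\<^sub>R y + t *\<^sub>R x" by (simp add: algebra_simps)
  also have "\<dots> \<in> X" using \<open>convex X\<close> \<open>y \<in> X\<close> \<open>x \<in> X\<close> t by (simp add: convex_def)
  finally have "quad_fun Q c y \<le> quad_fun Q c (y + t *\<^sub>R ?d)" by (rule min)
  also have "\<dots> = quad_fun Q c y + t * ?g + t\<^sup>2 / 2 * ?q"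
    by (rule quad_fun_along_line[OF sym])
  also have "\<dots> = quad_fun Q c y + t * (?g + t/2 * ?q)"
    by (simp add: power2_eq_square algebra_simps)
  finally have "0 \<le> ?g + t/2 * ?q" using t by (simp add: zero_le_mult_iff)
  then show False using tq g by linarith
qed

lemma avi_solution_unique:
  fixes Q :: "real^'n^'n"
  assumes pos: "\<And>d. d \<noteq> 0 \<Longrightarrow> 0 < d \<bullet> (Q *v d)"
    and y1: "y1 \<in> X" "\<forall>x\<in>X. 0 \<le> (Q *v y1 + c) \<bullet> (x - y1)"
    and y2: "y2 \<in> X" "\<forall>x\<in>X. 0 \<le> (Q *v y2 + c) \<bullet> (x - y2)"
  shows "y1 = y2"
proof (rule ccontr)
  assume "y1 \<noteq> y2"
  then have "0 < (y1 - y2) \<bullet> (Q *v (y1 - y2))" using pos by simp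
  moreover have "(Q *v y1 + c) \<bullet> (y2 - y1) + (Q *v y2 + c) \<bullet> (y1 - y2)
                 = - ((y1 - y2) \<bullet> (Q *v (y1 - y2)))"
    by (simp add: matrix_vector_mult_diff_distrib inner_diff_left inner_diff_right
        inner_add_left inner_commute algebra_simps)
  moreover have "0 \<le> (Q *v y1 + c) \<bullet> (y2 - y1)" and "0 \<le> (Q *v y2 + c) \<bullet> (y1 - y2)"
    using y1 y2 by blast+
  ultimately show False by linarith
qed

lemma qp_sol_avi:
  assumes psd: "\<And>x. 0 \<le> x \<bullet> (H *v x)" and "0 < \<rho>" and "x0 \<in> feasible A b"
  shows "qp_sol \<rho> H f A b z \<in> feasible A b"
    and "x \<in> feasible A b \<Longrightarrow>
           0 \<le> (Htil \<rho> H *v qp_sol \<rho> H f A b z + ftil \<rho> H f z) \<bullet> (x - qp_sol \<rho> H f A b z)"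
proof -
  let ?Q = "Htil \<rho> H" and ?c = "ftil \<rho> H f z" and ?X = "feasible A b"
  have coercive: "\<rho> * (norm d)\<^sup>2 \<le> d \<bullet> (?Q *v d)" for d
    using psd[of d] by (simp add: Htil_mult_vec inner_add_right Hsym_quadratic power2_norm_eq_inner)
  have nonneg: "0 \<le> d \<bullet> (?Q *v d)" for d
    using coercive[of d] \<open>0 < \<rho>\<close> by (meson order_trans mult_nonneg_nonneg less_imp_le zero_le_power2)
  have pos: "0 < d \<bullet> (?Q *v d)" if "d \<noteq> 0" for d
  proof -
    have "0 < \<rho> * (norm d)\<^sup>2" using that \<open>0 < \<rho>\<close> by simp
    then show ?thesis using coercive[of d] by linarith
  qed
  let ?P = "\<lambda>y. y \<in> ?X \<and> (\<forall>x\<in>?X. qp_obj \<rho> H f z y \<le> qp_obj \<rho> H f z x)"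
  have vi: "\<forall>x\<in>?X. 0 \<le> (?Q *v y + ?c) \<bullet> (x - y)" if "?P y" for y
    using that by (intro ballI quad_fun_min_imp_vi[OF Htil_transpose nonneg convex_feasible])
      (auto simp: qp_obj_eq_quad_fun)
  obtain y where "?P y"
    using quad_fun_attains_min[OF coercive \<open>0 < \<rho>\<close> closed_feasible \<open>x0 \<in> ?X\<close>, of ?c]
    by (auto simp: qp_obj_eq_quad_fun)
  then have "\<exists>!y. ?P y" using avi_solution_unique[OF pos] vi by blast
  then have "?P (qp_sol \<rho> H f A b z)" unfolding qp_sol_def by (rule theI')
  then show "qp_sol \<rho> H f A b z \<in> ?X"
    and "x \<in> ?X \<Longrightarrow> 0 \<le> (?Q *v qp_sol \<rho> H f A b z + ?c) \<bullet> (x - qp_sol \<rho> H f A b z)"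
    using vi by blast+
qed

section \<open>Equality-constrained KKT systems\<close>

definition rows_independent :: "real^'n^'m \<Rightarrow> 'm set \<Rightarrow> bool" where
  "rows_independent A S \<longleftrightarrow> (\<forall>c. (\<Sum>i\<in>S. c i *\<^sub>R A $ i) = 0 \<longrightarrow> (\<forall>i\<in>S. c i = 0))"

lemma rows_independent_if_independent_image:
  fixes A :: "real^'n^'m"
  assumes inj: "inj_on (($) A) S" and indep: "independent ((($) A) ` S)"
  shows "rows_independent A S"
  unfolding rows_independent_def
proof (intro allI impI ballI)
  fix c i assume sum0: "(\<Sum>i\<in>S. c i *\<^sub>R A $ i) = 0" and "i \<in> S"
  let ?c' = "\<lambda>v. c (the_inv_into S (($) A) v)"
  have "(\<Sum>v\<in>(($) A) ` S. ?c' v *\<^sub>R v) = (\<Sum>j\<in>S. c j *\<^sub>R A $ j)"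
    by (simp add: sum.reindex[OF inj] the_inv_into_f_f[OF inj])
  moreover have "\<forall>c. (\<Sum>v\<in>(($) A) ` S. c v *\<^sub>R v) = 0 \<longrightarrow> (\<forall>v\<in>(($) A) ` S. c v = 0)"
    using indep unfolding independent_explicit by blast
  ultimately have "\<forall>v\<in>(($) A) ` S. ?c' v = 0"
    using sum0 by auto
  then show "c i = 0" using \<open>i \<in> S\<close> the_inv_into_f_f[OF inj \<open>i \<in> S\<close>] by force
qed

lemma transpose_mult_vec_eq_sum:
  fixes A :: "real^'n^'m"
  assumes "\<forall>i. i \<notin> S \<longrightarrow> l $ i = 0"
  shows "transpose A *v l = (\<Sum>i\<in>S. l $ i *\<^sub>R A $ i)"
proof -
  have "transpose A *v l = (\<Sum>i\<in>UNIV. l $ i *\<^sub>R A $ i)"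
    by (simp add: vec_eq_iff vector_matrix_mult_def mult.commute transpose_matrix_vector)
  also have "\<dots> = (\<Sum>i\<in>S. l $ i *\<^sub>R A $ i)"
    using assms by (intro sum.mono_neutral_right) auto
  finally show ?thesis .
qed

lemma inner_transpose_mult_vec_eq_sum:
  fixes A :: "real^'n^'m"
  assumes "\<forall>i. i \<notin> S \<longrightarrow> l $ i = 0"
  shows "(transpose A *v l) \<bullet> d = (\<Sum>i\<in>S. l $ i * (A $ i \<bullet> d))"
  by (simp add: transpose_mult_vec_eq_sum[OF assms] inner_sum_left)

lemma rows_independent_transpose_mult_vec:
  fixes A :: "real^'n^'m"
  assumes "rows_independent A S" and supp: "\<forall>i. i \<notin> S \<longrightarrow> l $ i = 0"
    and "transpose A *v l = 0"
  shows "l = 0"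
proof -
  have "\<forall>i\<in>S. l $ i = 0"
    using assms unfolding rows_independent_def transpose_mult_vec_eq_sum[OF supp] by blast
  then show ?thesis using supp by (auto simp: vec_eq_iff)
qed

lemma kkt_sol_iff:
  "kkt_sol H f A b S (x, l) \<longleftrightarrow>
     (\<forall>i. i \<notin> S \<longrightarrow> l $ i = 0) \<and> H *v x + transpose A *v l = - f \<and> (\<forall>i\<in>S. A $ i \<bullet> x = b $ i)"
  by (simp add: kkt_sol_def)

lemma kkt_homogeneous_primal_zero:
  fixes M :: "real^'n^'n" and A :: "real^'n^'m"
  assumes pos: "\<And>x. x \<noteq> 0 \<Longrightarrow> 0 < x \<bullet> (M *v x)"
    and supp: "\<forall>i. i \<notin> S \<longrightarrow> l $ i = 0" and "M *v x + transpose A *v l = 0"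
    and "\<forall>i\<in>S. A $ i \<bullet> x = 0"
  shows "x = 0"
proof (rule ccontr)
  assume "x \<noteq> 0"
  have "(transpose A *v l) \<bullet> x = 0"
    using assms(4) by (simp add: inner_transpose_mult_vec_eq_sum[OF supp])
  moreover have "M *v x = - (transpose A *v l)" using assms(3) by (simp add: eq_neg_iff_add_eq_0)
  ultimately have "x \<bullet> (M *v x) = 0" by (simp add: inner_commute)
  then show False using pos[OF \<open>x \<noteq> 0\<close>] by simp
qed

lemma kkt_sol_primal_unique:
  fixes H :: "real^'n^'n"
  assumes pos: "\<And>x. x \<noteq> 0 \<Longrightarrow> 0 < x \<bullet> (H *v x)"
    and "kkt_sol H f A b S (x1, l1)" and "kkt_sol H f A b S (x2, l2)"
  shows "x1 = x2"
proof -
  have "x1 - x2 = 0"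
  proof (rule kkt_homogeneous_primal_zero[OF pos])
    show "\<forall>i. i \<notin> S \<longrightarrow> (l1 - l2) $ i = 0" using assms(2,3) by (simp add: kkt_sol_iff)
    show "H *v (x1 - x2) + transpose A *v (l1 - l2) = 0"
      using assms(2,3) by (simp add: kkt_sol_iff matrix_vector_mult_diff_distrib algebra_simps)
    show "\<forall>i\<in>S. A $ i \<bullet> (x1 - x2) = 0" using assms(2,3) by (simp add: kkt_sol_iff inner_diff_right)
  qed
  then show ?thesis by simp
qed

lemma kkt_sol_multiplier_unique:
  assumes "rows_independent A S" and "kkt_sol H f A b S (x, l1)" and "kkt_sol H f A b S (x, l2)"
  shows "l1 = l2"
proof -
  have "l1 - l2 = 0"
  proof (rule rows_independent_transpose_mult_vec[OF assms(1)])
    show "\<forall>i. i \<notin> S \<longrightarrow> (l1 - l2) $ i = 0" using assms(2,3) by (simp add: kkt_sol_iff)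
    have "H *v x + transpose A *v l1 = H *v x + transpose A *v l2"
      using assms(2,3) by (simp add: kkt_sol_iff)
    then show "transpose A *v (l1 - l2) = 0" by (simp add: matrix_vector_mult_diff_distrib)
  qed
  then show ?thesis by simp
qed

lemma kkt_sol_active_set:
  "kkt_sol H f A b S (x, l) \<Longrightarrow> kkt_sol H f A b (active_set A b x) (x, l)"
  by (auto simp: kkt_sol_iff active_set_def)

lemma kkt_sol_active_set_if_complementary:
  assumes "H *v x + f + transpose A *v l = 0" and "\<forall>i. l $ i * (b $ i - A $ i \<bullet> x) = 0"
  shows "kkt_sol H f A b (active_set A b x) (x, l)"
proof -
  have "H *v x + transpose A *v l = - f"
    using assms(1) by (simp add: eq_neg_iff_add_eq_0 add.commute add.left_commute)
  then show ?thesis using assms(2) by (auto simp: kkt_sol_iff active_set_def)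
qed

lemma kkt_sol_solves_avi:
  assumes kkt: "kkt_sol H f A b S (x, l)" and "\<forall>i. 0 \<le> l $ i" and "y \<in> feasible A b"
  shows "0 \<le> (H *v x + f) \<bullet> (y - x)"
proof -
  have supp: "\<forall>i. i \<notin> S \<longrightarrow> l $ i = 0" and eq: "H *v x + transpose A *v l = - f"
    and act: "\<forall>i\<in>S. A $ i \<bullet> x = b $ i"
    using kkt by (auto simp: kkt_sol_iff)
  have "H *v x + f = (H *v x + transpose A *v l) + f - transpose A *v l" by simp
  also have "\<dots> = - (transpose A *v l)" using eq by simp
  finally have "(H *v x + f) \<bullet> (y - x) = - (\<Sum>i\<in>S. l $ i * (A $ i \<bullet> (y - x)))"
    by (simp add: inner_transpose_mult_vec_eq_sum[OF supp])
  moreover have "l $ i * (A $ i \<bullet> (y - x)) \<le> 0" if "i \<in> S" for i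
  proof -
    have "A $ i \<bullet> (y - x) \<le> 0"
      using \<open>y \<in> feasible A b\<close> act that by (simp add: feasible_def inner_diff_right)
    then show ?thesis using assms(2) by (simp add: mult_nonneg_nonpos)
  qed
  ultimately show ?thesis by (simp add: sum_nonpos)
qed

lemma kkt_matrix_surjective:
  fixes M :: "real^'n^'n" and A :: "real^'n^'m"
  assumes pos: "\<And>x. x \<noteq> 0 \<Longrightarrow> 0 < x \<bullet> (M *v x)" and indep: "rows_independent A S"
  shows "\<exists>x l. (\<forall>i. i \<notin> S \<longrightarrow> l $ i = 0) \<and> M *v x + transpose A *v l = g
               \<and> (\<forall>i\<in>S. A $ i \<bullet> x = r $ i)"
proof -
  \<comment> \<open>Returning \<open>l $ i\<close> for \<open>i \<notin> S\<close> makes the KKT map an endomorphism, so injective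
    implies surjective.\<close>
  define P :: "real^'m \<Rightarrow> real^'m" where "P l = (\<chi> i. if i \<in> S then l $ i else 0)" for l
  define \<Phi> :: "(real^'n) \<times> (real^'m) \<Rightarrow> (real^'n) \<times> (real^'m)" where
    "\<Phi> = (\<lambda>(x, l). (M *v x + transpose A *v P l, \<chi> i. if i \<in> S then A $ i \<bullet> x else l $ i))"
  have P_add: "P (l + l') = P l + P l'" and P_scaleR: "P (t *\<^sub>R l) = t *\<^sub>R P l" for l l' t
    by (simp_all add: P_def vec_eq_iff)
  have "linear \<Phi>"
  proof (rule linearI)
    fix p q :: "(real^'n) \<times> (real^'m)" and t :: real
    show "\<Phi> (p + q) = \<Phi> p + \<Phi> q"
      by (cases p, cases q) (simp add: \<Phi>_def P_add matrix_vector_right_distrib vec_eq_iff inner_add_right)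
    show "\<Phi> (t *\<^sub>R p) = t *\<^sub>R \<Phi> p"
      by (cases p) (simp add: \<Phi>_def P_scaleR matrix_vector_mult_scaleR vec_eq_iff distrib_left)
  qed
  have ker: "p = 0" if "\<Phi> p = 0" for p
  proof -
    obtain x l where p: "p = (x, l)" by (cases p)
    have eq: "M *v x + transpose A *v P l = 0"
      and cons: "(\<chi> i. if i \<in> S then A $ i \<bullet> x else l $ i) = 0"
      using that by (simp_all add: \<Phi>_def p zero_prod_def)
    have supp: "\<forall>i. i \<notin> S \<longrightarrow> l $ i = 0" and act: "\<forall>i\<in>S. A $ i \<bullet> x = 0"
      using cons by (auto simp: vec_eq_iff split: if_splits)
    have "P l = l" using supp by (simp add: P_def vec_eq_iff)
    then have eq': "M *v x + transpose A *v l = 0" using eq by simp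
    have "x = 0" by (rule kkt_homogeneous_primal_zero[OF pos supp eq' act])
    moreover have "l = 0"
      using eq' \<open>x = 0\<close> by (intro rows_independent_transpose_mult_vec[OF indep supp]) simp
    ultimately show ?thesis by (simp add: p zero_prod_def)
  qed
  have "inj \<Phi>"
  proof (rule injI)
    fix p q assume "\<Phi> p = \<Phi> q"
    then have "\<Phi> (p - q) = 0" by (simp add: linear_diff[OF \<open>linear \<Phi>\<close>])
    then have "p - q = 0" by (rule ker)
    then show "p = q" by simp
  qed
  then obtain x l where "\<Phi> (x, l) = (g, r)"
    using linear_injective_imp_surjective[OF \<open>linear \<Phi>\<close>] by (metis surjD surj_pair)
  then have "M *v x + transpose A *v P l = g"
    and cons: "(\<chi> i. if i \<in> S then A $ i \<bullet> x else l $ i) = r"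
    by (simp_all add: \<Phi>_def)
  moreover have "\<forall>i\<in>S. A $ i \<bullet> x = r $ i"
    using cons by (metis (mono_tags) vec_lambda_beta)
  moreover have "\<forall>i. i \<notin> S \<longrightarrow> P l $ i = 0" by (simp add: P_def)
  ultimately show ?thesis by blast
qed

lemma rows_independent_dual_direction:
  fixes A :: "real^'n^'m"
  assumes "rows_independent A S" and "i \<in> S"
  obtains d where "A $ i \<bullet> d = 1" and "\<And>j. j \<in> S \<Longrightarrow> j \<noteq> i \<Longrightarrow> A $ j \<bullet> d = 0"
proof -
  have pos: "x \<noteq> 0 \<Longrightarrow> 0 < x \<bullet> (mat 1 *v x)" for x :: "real^'n" by simp
  obtain d :: "real^'n" and l :: "real^'m" where "\<forall>j\<in>S. A $ j \<bullet> d = axis i 1 $ j"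
    using kkt_matrix_surjective[OF pos assms(1), of 0 "axis i 1"] by blast
  then show thesis using \<open>i \<in> S\<close> by (intro that[of d]) (auto simp: axis_def)
qed

lemma kkt_sol_exists:
  fixes H :: "real^'n^'n" and A :: "real^'n^'m"
  assumes pos: "\<And>x. x \<noteq> 0 \<Longrightarrow> 0 < x \<bullet> (H *v x)" and y: "\<forall>i\<in>S. A $ i \<bullet> y = b $ i"
  shows "\<exists>p. kkt_sol H f A b S p"
proof -
  obtain B where "B \<subseteq> (($) A) ` S" and "independent B" and span: "(($) A) ` S \<subseteq> span B"
    by (rule maximal_independent_subset)
  then obtain S' where "S' \<subseteq> S" and "inj_on (($) A) S'" and B: "B = (($) A) ` S'"
    by (meson subset_image_inj)
  then have "rows_independent A S'"
    using \<open>independent B\<close> by (simp add: rows_independent_if_independent_image)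
  then obtain x l where supp: "\<forall>i. i \<notin> S' \<longrightarrow> l $ i = 0" and eq: "H *v x + transpose A *v l = - f"
    and act: "\<forall>i\<in>S'. A $ i \<bullet> x = b $ i"
    using kkt_matrix_surjective[OF pos] by blast
  \<comment> \<open>The other equations follow because the system is consistent: \<open>y\<close> solves it.\<close>
  have "A $ i \<bullet> x = b $ i" if "i \<in> S" for i
  proof -
    have "orthogonal (A $ j) (x - y)" if "j \<in> S'" for j
      using that act y \<open>S' \<subseteq> S\<close> by (auto simp: orthogonal_def inner_diff_right)
    then have "orthogonal (x - y) v" if "v \<in> B" for v
      using that by (auto simp: B orthogonal_commute)
    then have "orthogonal (x - y) (A $ i)"
      using span \<open>i \<in> S\<close> by (intro orthogonal_to_span[of "A $ i" B]) auto
    then have "A $ i \<bullet> x = A $ i \<bullet> y" by (simp add: orthogonal_commute orthogonal_def inner_diff_right)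
    then show ?thesis using y \<open>i \<in> S\<close> by simp
  qed
  then have "kkt_sol H f A b S (x, l)" using supp eq \<open>S' \<subseteq> S\<close> by (auto simp: kkt_sol_iff)
  then show ?thesis by blast
qed

section \<open>Convergence of the plain iteration\<close>

lemma summable_if_descent:
  fixes V t :: "nat \<Rightarrow> real"
  assumes descent: "\<And>j. V (Suc j) \<le> V j - t j" and "\<And>j. 0 \<le> V j" and "\<And>j. 0 \<le> t j"
  shows "summable t"
proof (rule summableI_nonneg_bounded)
  fix n
  have "(\<Sum>j<n. t j) \<le> V 0 - V n"
  proof (induction n)
    case (Suc n)
    then show ?case using descent[of n] by simp
  qed simp
  then show "(\<Sum>j<n. t j) \<le> V 0" using \<open>0 \<le> V n\<close> by linarith
qed fact

lemma LIMSEQ_if_summable_norm_sq: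
  fixes X :: "nat \<Rightarrow> 'a::real_normed_vector"
  assumes "summable (\<lambda>j. (norm (X j - L))\<^sup>2)"
  shows "X \<longlonglongrightarrow> L"
proof -
  have "(\<lambda>j. sqrt ((norm (X j - L))\<^sup>2)) \<longlonglongrightarrow> sqrt 0"
    by (intro tendsto_real_sqrt summable_LIMSEQ_zero assms)
  then have "(\<lambda>j. norm (X j - L)) \<longlonglongrightarrow> 0" by simp
  then show ?thesis by (simp add: tendsto_norm_zero_iff LIM_zero_iff)
qed

locale avi_setting =
  fixes H :: "real^'n^'n" and f :: "real^'n" and A :: "real^'n^'m" and b :: "real^'m"
    and \<rho> :: real and xstar :: "real^'n"
  assumes pos_def: "\<forall>x. x \<noteq> 0 \<longrightarrow> 0 < x \<bullet> ((H + transpose H) *v x)"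
    and rho_pos: "0 < \<rho>"
    and xstar_feasible: "xstar \<in> feasible A b"
    and xstar_avi: "\<forall>y\<in>feasible A b. 0 \<le> (H *v xstar + f) \<bullet> (y - xstar)"
begin

lemma H_pos: "x \<noteq> 0 \<Longrightarrow> 0 < x \<bullet> (H *v x)"
  using pos_def quadratic_add_transpose[of x H] by auto

lemma H_nonneg: "0 \<le> x \<bullet> (H *v x)"
  using H_pos[of x] by (cases "x = 0") auto

abbreviation qsol :: "real^'n \<Rightarrow> real^'n" where
  "qsol z \<equiv> qp_sol \<rho> H f A b z"

lemma qsol_feasible: "qsol z \<in> feasible A b"
  and qsol_avi: "x \<in> feasible A b \<Longrightarrow> 0 \<le> (Htil \<rho> H *v qsol z + ftil \<rho> H f z) \<bullet> (x - qsol z)"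
  using qp_sol_avi[OF H_nonneg rho_pos xstar_feasible] by blast+

definition R :: "real^'n^'n" where
  "R = \<rho> *\<^sub>R mat 1 + H"

definition T :: "real^'n^'n" where
  "T = \<rho> *\<^sub>R mat 1 + (1/2) *\<^sub>R Hsym H"

definition dr_update :: "real^'n \<Rightarrow> real^'n \<Rightarrow> real^'n" where
  "dr_update y z = matrix_inv R *v (\<rho> *\<^sub>R y + H *v z + (1/2) *\<^sub>R (Hsym H *v (y - z)))"

definition lyapunov :: "real^'n \<Rightarrow> real" where
  "lyapunov e = (R *v e) \<bullet> (matrix_inv T *v (R *v e))"

lemma R_mult_vec: "R *v x = \<rho> *\<^sub>R x + H *v x"
  unfolding R_def by (metis matrix_vector_mul_lid matrix_vector_mult_add_rdistrib scaleR_matrix_vector_assoc)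

lemma T_mult_vec: "T *v x = \<rho> *\<^sub>R x + (1/2) *\<^sub>R (Hsym H *v x)"
  unfolding T_def by (metis matrix_vector_mul_lid matrix_vector_mult_add_rdistrib scaleR_matrix_vector_assoc)

lemma T_transpose: "transpose T = T"
  unfolding T_def by (simp add: transpose_add transpose_scalar Hsym_transpose)

lemma R_invertible: "invertible R"
proof (rule invertible_if_pos_quadratic)
  fix x :: "real^'n" assume "x \<noteq> 0"
  then have "0 < \<rho> * (x \<bullet> x)" and "0 < x \<bullet> (H *v x)" using rho_pos H_pos by auto
  then show "0 < x \<bullet> (R *v x)" by (simp add: R_mult_vec inner_add_right)
qed

lemma T_invertible: "invertible T"
proof (rule invertible_if_pos_quadratic)
  fix x :: "real^'n" assume "x \<noteq> 0"
  then have "0 < \<rho> * (x \<bullet> x)" and "0 < x \<bullet> (H *v x)" using rho_pos H_pos by auto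
  then show "0 < x \<bullet> (T *v x)" by (simp add: T_mult_vec inner_add_right Hsym_quadratic)
qed

lemma lyapunov_nonneg: "0 \<le> lyapunov e"
proof -
  let ?a = "matrix_inv T *v (R *v e)"
  have "lyapunov e = ?a \<bullet> (T *v ?a)"
    by (simp add: lyapunov_def matrix_inv_mult_vec(1)[OF T_invertible] inner_commute)
  also have "\<dots> = \<rho> * (?a \<bullet> ?a) + (1/2) * (?a \<bullet> (H *v ?a))"
    by (simp add: T_mult_vec inner_add_right Hsym_quadratic)
  finally show ?thesis using rho_pos H_nonneg[of ?a] by simp
qed

lemma R_dr_update_error: "R *v (dr_update y z - xstar) = R *v (z - xstar) + T *v (y - z)"
proof -
  have "R *v dr_update y z = \<rho> *\<^sub>R y + H *v z + (1/2) *\<^sub>R (Hsym H *v (y - z))"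
    unfolding dr_update_def by (rule matrix_inv_mult_vec(1)[OF R_invertible])
  then show ?thesis
    by (simp add: matrix_vector_mult_diff_distrib R_mult_vec T_mult_vec algebra_simps)
qed

lemma R_error_inner_step_le:
  fixes z :: "real^'n"
  defines "e \<equiv> z - xstar" and "w \<equiv> qsol z - z"
  shows "(R *v e) \<bullet> w \<le> - \<rho> * (w \<bullet> w) - (1/2) * (w \<bullet> (Hsym H *v w)) - (1/2) * (e \<bullet> (Hsym H *v e))"
proof -
  let ?y = "qsol z" and ?Q = "Htil \<rho> H" and ?S = "Hsym H"
  have "?Q *v ?y + ftil \<rho> H f z = ?Q *v w + H *v z + f"
    by (simp add: ftil_def w_def matrix_vector_mult_diff_rdistrib matrix_vector_mult_diff_distrib algebra_simps)
  moreover have "0 \<le> (?Q *v ?y + ftil \<rho> H f z) \<bullet> (xstar - ?y)"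
    using qsol_avi xstar_feasible by blast
  moreover have "0 \<le> (H *v xstar + f) \<bullet> (?y - xstar)"
    using xstar_avi qsol_feasible by blast
  moreover have "?y - xstar = e + w" and "xstar - ?y = - (e + w)" by (simp_all add: e_def w_def)
  ultimately have "0 \<le> (?Q *v w + H *v z + f) \<bullet> (- (e + w)) + (H *v xstar + f) \<bullet> (e + w)"
    by simp
  then have vi_sum: "(?Q *v w + H *v e) \<bullet> (e + w) \<le> 0"
    by (simp add: e_def matrix_vector_mult_diff_distrib inner_diff_left inner_add_left inner_add_right algebra_simps)
  have sym: "(?S *v w) \<bullet> e = w \<bullet> (?S *v e)" "e \<bullet> (?S *v w) = w \<bullet> (?S *v e)"
    using inner_symmetric_matrix_vector[OF Hsym_transpose, where x = w and y = e]
    by (simp_all add: inner_commute)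
  have "(R *v e) \<bullet> w + w \<bullet> (?S *v e) + \<rho> * (w \<bullet> w) + w \<bullet> (?S *v w) + e \<bullet> (?S *v e) \<le> 0"
    using vi_sum unfolding Htil_mult_vec R_mult_vec
    by (simp add: inner_add_left inner_add_right sym Hsym_quadratic inner_commute algebra_simps)
  moreover have "0 \<le> (e + w) \<bullet> (?S *v (e + w))" using H_nonneg Hsym_quadratic by metis
  then have "0 \<le> e \<bullet> (?S *v e) + 2 * (w \<bullet> (?S *v e)) + w \<bullet> (?S *v w)"
    using sym by (simp add: matrix_vector_right_distrib inner_add_left inner_add_right inner_commute)
  ultimately show ?thesis by linarith
qed

lemma lyapunov_decrease:
  "lyapunov (dr_update (qsol z) z - xstar)
     \<le> lyapunov (z - xstar) - \<rho> * (norm (qsol z - z))\<^sup>2 - (z - xstar) \<bullet> (H *v (z - xstar))"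
proof -
  let ?e = "z - xstar" and ?w = "qsol z - z" and ?Ti = "matrix_inv T"
  let ?v = "R *v ?e"
  have "(T *v ?w) \<bullet> (?Ti *v ?v) = ?w \<bullet> (T *v (?Ti *v ?v))"
    by (rule inner_symmetric_matrix_vector[OF T_transpose])
  then have cross: "(T *v ?w) \<bullet> (?Ti *v ?v) = ?v \<bullet> ?w"
    by (simp add: matrix_inv_mult_vec(1)[OF T_invertible] inner_commute)
  have "lyapunov (dr_update (qsol z) z - xstar) = (?v + T *v ?w) \<bullet> (?Ti *v (?v + T *v ?w))"
    by (simp add: lyapunov_def R_dr_update_error)
  also have "\<dots> = ?v \<bullet> (?Ti *v ?v) + ?v \<bullet> (?Ti *v (T *v ?w)) + ((T *v ?w) \<bullet> (?Ti *v ?v) + (T *v ?w) \<bullet> (?Ti *v (T *v ?w)))"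
    by (simp only: matrix_vector_right_distrib inner_add_left inner_add_right)
  also have "\<dots> = lyapunov ?e + 2 * (?v \<bullet> ?w) + ?w \<bullet> (T *v ?w)"
    by (simp only: matrix_inv_mult_vec(2)[OF T_invertible] cross lyapunov_def inner_commute[of "T *v ?w" ?w]
        mult_2 add.assoc)
  also have "?w \<bullet> (T *v ?w) = \<rho> * (?w \<bullet> ?w) + (1/2) * (?w \<bullet> (Hsym H *v ?w))"
    by (simp add: T_mult_vec inner_add_right)
  finally show ?thesis
    using R_error_inner_step_le[of z] H_nonneg[of ?w] Hsym_quadratic[of ?w H] Hsym_quadratic[of ?e H]
    by (simp add: power2_norm_eq_inner)
qed

lemma qp_gradient_tendsto:
  assumes "Z \<longlonglongrightarrow> xstar" and "(\<lambda>j. qsol (Z j)) \<longlonglongrightarrow> xstar"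
  shows "(\<lambda>j. Htil \<rho> H *v qsol (Z j) + ftil \<rho> H f (Z j)) \<longlonglongrightarrow> H *v xstar + f"
proof -
  have "(\<lambda>j. Htil \<rho> H *v qsol (Z j) + ftil \<rho> H f (Z j))
          \<longlonglongrightarrow> Htil \<rho> H *v xstar + (f + (H - Htil \<rho> H) *v xstar)"
    unfolding ftil_def by (intro tendsto_intros assms)
  then show ?thesis by (simp add: matrix_vector_mult_diff_rdistrib algebra_simps)
qed

lemma dr_update_converges:
  assumes iter: "\<And>j. Z (Suc j) = dr_update (qsol (Z j)) (Z j)"
  shows "Z \<longlonglongrightarrow> xstar" and "(\<lambda>j. qsol (Z j)) \<longlonglongrightarrow> xstar"
proof -
  obtain \<mu> where "0 < \<mu>" and \<mu>: "\<And>x. \<mu> * (norm x)\<^sup>2 \<le> x \<bullet> (H *v x)"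
    using pos_quadratic_uniform[OF H_pos] by blast
  define t where "t j = \<rho> * (norm (qsol (Z j) - Z j))\<^sup>2 + \<mu> * (norm (Z j - xstar))\<^sup>2" for j
  have "summable t"
  proof (rule summable_if_descent[where V = "\<lambda>j. lyapunov (Z j - xstar)"])
    show "lyapunov (Z (Suc j) - xstar) \<le> lyapunov (Z j - xstar) - t j" for j
      using lyapunov_decrease[of "Z j"] \<mu>[of "Z j - xstar"] by (simp add: iter t_def)
    show "0 \<le> t j" for j using rho_pos \<open>0 < \<mu>\<close> by (simp add: t_def)
  qed (rule lyapunov_nonneg)
  have Z_sq: "summable (\<lambda>j. (norm (Z j - xstar))\<^sup>2)"
  proof (rule summable_comparison_test'[OF summable_divide[OF \<open>summable t\<close>, of \<mu>]])
    have "\<mu> * (norm (Z j - xstar))\<^sup>2 \<le> t j" for j using rho_pos by (simp add: t_def)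
    then show "norm ((norm (Z j - xstar))\<^sup>2) \<le> t j / \<mu>" for j
      using \<open>0 < \<mu>\<close> by (simp add: pos_le_divide_eq mult.commute)
  qed
  have W_sq: "summable (\<lambda>j. (norm (qsol (Z j) - Z j - 0))\<^sup>2)"
  proof (rule summable_comparison_test'[OF summable_divide[OF \<open>summable t\<close>, of \<rho>]])
    have "\<rho> * (norm (qsol (Z j) - Z j))\<^sup>2 \<le> t j" for j using \<open>0 < \<mu>\<close> by (simp add: t_def)
    then show "norm ((norm (qsol (Z j) - Z j - 0))\<^sup>2) \<le> t j / \<rho>" for j
      using rho_pos by (simp add: pos_le_divide_eq mult.commute)
  qed
  show "Z \<longlonglongrightarrow> xstar" using Z_sq by (rule LIMSEQ_if_summable_norm_sq)
  have "(\<lambda>j. qsol (Z j) - Z j) \<longlonglongrightarrow> 0" using W_sq by (rule LIMSEQ_if_summable_norm_sq)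
  then have "(\<lambda>j. (qsol (Z j) - Z j) + Z j) \<longlonglongrightarrow> 0 + xstar"
    using \<open>Z \<longlonglongrightarrow> xstar\<close> by (rule tendsto_add)
  then show "(\<lambda>j. qsol (Z j)) \<longlonglongrightarrow> xstar" by simp
qed

end

section \<open>Identification of the optimal active set\<close>

lemma eventually_strict_constraints:
  fixes A :: "real^'n^'m"
  assumes "(Y \<longlongrightarrow> x) F" and "\<forall>j\<in>J. A $ j \<bullet> x < b $ j"
  shows "\<forall>\<^sub>F k in F. \<forall>j\<in>J. A $ j \<bullet> Y k < b $ j"
proof (intro eventually_ball_finite ballI)
  fix j assume "j \<in> J"
  have "((\<lambda>k. A $ j \<bullet> Y k) \<longlongrightarrow> A $ j \<bullet> x) F" by (intro tendsto_intros assms(1))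
  then show "\<forall>\<^sub>F k in F. A $ j \<bullet> Y k < b $ j" using assms(2) \<open>j \<in> J\<close> by (simp add: order_tendstoD(2))
qed simp

lemma inactive_constraints_strict:
  "x \<in> feasible A b \<Longrightarrow> \<forall>j\<in>- active_set A b x. A $ j \<bullet> x < b $ j"
  by (auto simp: feasible_def active_set_def less_le)

lemma avi_solution_constraint_active:
  fixes A :: "real^'n^'m"
  assumes y: "y \<in> feasible A b" and vi: "\<forall>x\<in>feasible A b. 0 \<le> g \<bullet> (x - y)"
    and descent: "g \<bullet> d < 0" and "0 < A $ i \<bullet> d" and "0 < t0"
    and others: "\<And>j. j \<noteq> i \<Longrightarrow> A $ j \<bullet> (y + t0 *\<^sub>R d) \<le> b $ j"
  shows "A $ i \<bullet> y = b $ i"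
proof (rule ccontr)
  assume "A $ i \<bullet> y \<noteq> b $ i"
  moreover have "A $ i \<bullet> y \<le> b $ i" using y by (simp add: feasible_def)
  ultimately have slack: "0 < b $ i - A $ i \<bullet> y" by simp
  define t where "t = min t0 ((b $ i - A $ i \<bullet> y) / (A $ i \<bullet> d))"
  have "0 < t" using slack \<open>0 < t0\<close> \<open>0 < A $ i \<bullet> d\<close> by (simp add: t_def)
  have "t \<le> t0" and "t \<le> (b $ i - A $ i \<bullet> y) / (A $ i \<bullet> d)" by (simp_all add: t_def)
  then have step_i: "t * (A $ i \<bullet> d) \<le> b $ i - A $ i \<bullet> y"
    by (simp add: pos_le_divide_eq[OF \<open>0 < A $ i \<bullet> d\<close>])
  have "y + t *\<^sub>R d \<in> feasible A b"
    unfolding feasible_def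
  proof (intro CollectI allI)
    fix j
    show "A $ j \<bullet> (y + t *\<^sub>R d) \<le> b $ j"
    proof (cases "j = i")
      case True
      then show ?thesis using step_i by (simp add: inner_add_right)
    next
      case False
      have "y + t *\<^sub>R d = (1 - t / t0) *\<^sub>R y + (t / t0) *\<^sub>R (y + t0 *\<^sub>R d)"
        using \<open>0 < t0\<close> by (simp add: algebra_simps)
      then have "A $ j \<bullet> (y + t *\<^sub>R d) = (1 - t / t0) * (A $ j \<bullet> y) + (t / t0) * (A $ j \<bullet> (y + t0 *\<^sub>R d))"
        by (simp add: inner_add_right)
      also have "\<dots> \<le> b $ j"
        using y others[OF False] \<open>0 < t\<close> \<open>t \<le> t0\<close>
        by (intro convex_bound_le) (auto simp: feasible_def)
      finally show ?thesis .
    qed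
  qed
  then have "0 \<le> g \<bullet> ((y + t *\<^sub>R d) - y)" using vi by blast
  then show False using descent \<open>0 < t\<close> by (simp add: zero_le_mult_iff)
qed

locale dr_daqp_setting = avi_setting H f A b \<rho> xstar
  for H :: "real^'n^'n" and f :: "real^'n" and A :: "real^'n^'m" and b :: "real^'m"
    and \<rho> :: real and xstar :: "real^'n" +
  fixes lamstar :: "real^'m" and sel :: "nat \<Rightarrow> 'm set \<Rightarrow> (real^'n) \<times> (real^'m)"
  assumes licq: "rows_independent A (active_set A b xstar)"
    and xstar_kkt: "kkt_sol H f A b (active_set A b xstar) (xstar, lamstar)"
    and lamstar_nonneg: "\<forall>i. 0 \<le> lamstar $ i"
    and strict_complementarity: "\<forall>i\<in>active_set A b xstar. 0 < lamstar $ i"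
    and sel_kkt: "\<And>k S. (\<exists>p. kkt_sol H f A b S p) \<Longrightarrow> kkt_sol H f A b S (sel k S)"
begin

abbreviation Aopt :: "'m set" where
  "Aopt \<equiv> active_set A b xstar"

lemma gradient_inner_dual_direction:
  assumes "i \<in> Aopt" and "A $ i \<bullet> d = 1" and "\<And>j. j \<in> Aopt \<Longrightarrow> j \<noteq> i \<Longrightarrow> A $ j \<bullet> d = 0"
  shows "(H *v xstar + f) \<bullet> d = - lamstar $ i"
proof -
  have supp: "\<forall>j. j \<notin> Aopt \<longrightarrow> lamstar $ j = 0" and eq: "H *v xstar + transpose A *v lamstar = - f"
    using xstar_kkt by (simp_all add: kkt_sol_iff)
  have "H *v xstar + f = (H *v xstar + transpose A *v lamstar) + f - transpose A *v lamstar" by simp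
  also have "\<dots> = - (transpose A *v lamstar)" using eq by simp
  finally
  have "(H *v xstar + f) \<bullet> d = - (\<Sum>j\<in>Aopt. lamstar $ j * (A $ j \<bullet> d))"
    by (simp add: inner_transpose_mult_vec_eq_sum[OF supp])
  also have "(\<Sum>j\<in>Aopt. lamstar $ j * (A $ j \<bullet> d)) = (\<Sum>j\<in>Aopt. if j = i then lamstar $ j else 0)"
    using assms by (intro sum.cong) auto
  finally show ?thesis using \<open>i \<in> Aopt\<close> by simp
qed

lemma eventually_optimal_constraint_active:
  assumes Z: "Z \<longlonglongrightarrow> xstar" and Y: "(\<lambda>j. qsol (Z j)) \<longlonglongrightarrow> xstar" and "i \<in> Aopt"
  shows "\<forall>\<^sub>F k in sequentially. A $ i \<bullet> qsol (Z k) = b $ i"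
proof -
  obtain d where d_i: "A $ i \<bullet> d = 1" and d_j: "\<And>j. j \<in> Aopt \<Longrightarrow> j \<noteq> i \<Longrightarrow> A $ j \<bullet> d = 0"
    using rows_independent_dual_direction[OF licq \<open>i \<in> Aopt\<close>] by blast
  have "((\<lambda>t. xstar + t *\<^sub>R d) \<longlongrightarrow> xstar + 0 *\<^sub>R d) (at_right 0)" by (intro tendsto_intros)
  then have "\<forall>\<^sub>F t in at_right 0. \<forall>j\<in>- Aopt. A $ j \<bullet> (xstar + t *\<^sub>R d) < b $ j"
    using inactive_constraints_strict[OF xstar_feasible]
    by (intro eventually_strict_constraints[where x = "xstar + 0 *\<^sub>R d"]) simp_all
  then have "\<exists>t0::real. 0 < t0 \<and> (\<forall>j\<in>- Aopt. A $ j \<bullet> (xstar + t0 *\<^sub>R d) < b $ j)"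
    by (intro eventually_happens'[OF _ eventually_conj[OF eventually_at_right_less]]) simp_all
  then obtain t0 :: real where "0 < t0" and t0: "\<forall>j\<in>- Aopt. A $ j \<bullet> (xstar + t0 *\<^sub>R d) < b $ j"
    by blast
  let ?g = "\<lambda>k. Htil \<rho> H *v qsol (Z k) + ftil \<rho> H f (Z k)"
  have "(\<lambda>k. ?g k \<bullet> d) \<longlonglongrightarrow> (H *v xstar + f) \<bullet> d"
    by (rule tendsto_inner[OF qp_gradient_tendsto[OF Z Y] tendsto_const])
  moreover have "(H *v xstar + f) \<bullet> d < 0"
    using gradient_inner_dual_direction[OF \<open>i \<in> Aopt\<close> d_i d_j] strict_complementarity \<open>i \<in> Aopt\<close>
    by simp
  ultimately have "\<forall>\<^sub>F k in sequentially. ?g k \<bullet> d < 0" by (rule order_tendstoD(2))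
  moreover have "\<forall>\<^sub>F k in sequentially. \<forall>j\<in>- Aopt. A $ j \<bullet> (qsol (Z k) + t0 *\<^sub>R d) < b $ j"
    using t0 by (intro eventually_strict_constraints[where x = "xstar + t0 *\<^sub>R d"] tendsto_intros Y)
  ultimately show ?thesis
  proof eventually_elim
    case (elim k)
    show ?case
    proof (rule avi_solution_constraint_active[OF qsol_feasible _ elim(1) _ \<open>0 < t0\<close>])
      show "\<forall>x\<in>feasible A b. 0 \<le> ?g k \<bullet> (x - qsol (Z k))" using qsol_avi by blast
      show "0 < A $ i \<bullet> d" using d_i by simp
      fix j assume "j \<noteq> i"
      show "A $ j \<bullet> (qsol (Z k) + t0 *\<^sub>R d) \<le> b $ j"
      proof (cases "j \<in> Aopt")
        case True
        then show ?thesis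
          using d_j[OF True \<open>j \<noteq> i\<close>] qsol_feasible[of "Z k"] by (simp add: inner_add_right feasible_def)
      next
        case False
        then show ?thesis using elim(2) by (simp add: less_imp_le)
      qed
    qed
  qed
qed

lemma active_set_identified:
  assumes "Z \<longlonglongrightarrow> xstar" and "(\<lambda>j. qsol (Z j)) \<longlonglongrightarrow> xstar"
  shows "\<forall>\<^sub>F k in sequentially. active_set A b (qsol (Z k)) = Aopt"
proof -
  have "\<forall>\<^sub>F k in sequentially. \<forall>i\<in>Aopt. A $ i \<bullet> qsol (Z k) = b $ i"
    using eventually_optimal_constraint_active[OF assms] by (intro eventually_ball_finite) auto
  moreover have "\<forall>\<^sub>F k in sequentially. \<forall>i\<in>- Aopt. A $ i \<bullet> qsol (Z k) < b $ i"
    using assms(2) inactive_constraints_strict[OF xstar_feasible] by (rule eventually_strict_constraints)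
  ultimately show ?thesis
  proof eventually_elim
    case (elim k)
    show ?case
    proof (rule set_eqI)
      fix i
      show "i \<in> active_set A b (qsol (Z k)) \<longleftrightarrow> i \<in> Aopt"
      proof (cases "i \<in> Aopt")
        case True
        then show ?thesis using elim(1) by (simp add: active_set_def[of A b "qsol (Z k)"])
      next
        case False
        then have "A $ i \<bullet> qsol (Z k) < b $ i" using elim(2) by simp
        then show ?thesis using False by (simp add: active_set_def[of A b "qsol (Z k)"])
      qed
    qed
  qed
qed

end

section \<open>Termination of DR-DAQP\<close>

lemma decseq_finite_range_eventually_const:
  fixes d :: "nat \<Rightarrow> 'a::linorder"
  assumes "finite (range d)" and "decseq d"
  obtains K where "\<And>k. K \<le> k \<Longrightarrow> d k = d K"
proof -
  obtain K where K: "d K = Min (range d)" using Min_in[OF assms(1)] by (metis empty_not_UNIV image_is_empty imageE)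
  show thesis
  proof
    fix k assume "K \<le> k"
    then have "d k \<le> d K" using \<open>decseq d\<close> by (simp add: decseqD)
    moreover have "d K \<le> d k" using K assms(1) by simp
    ultimately show "d k = d K" by simp
  qed
qed

context dr_daqp_setting
begin

lemma sel_kkt_sol: "kkt_sol H f A b (active_set A b y) (sel k (active_set A b y))"
proof (rule sel_kkt)
  have "\<forall>i\<in>active_set A b y. A $ i \<bullet> y = b $ i" by (auto simp: active_set_def)
  then show "\<exists>p. kkt_sol H f A b (active_set A b y) p" using kkt_sol_exists[OF H_pos] by blast
qed

lemma fst_sel_eq_fst_sel_0: "fst (sel k (active_set A b y)) = fst (sel 0 (active_set A b y))"
  using kkt_sol_primal_unique[OF H_pos] sel_kkt_sol[of y k] sel_kkt_sol[of y 0] by (metis prod.collapse)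

lemma kkt_sol_optimal_iff: "kkt_sol H f A b Aopt (x, l) \<longleftrightarrow> (x, l) = (xstar, lamstar)"
proof
  assume kkt: "kkt_sol H f A b Aopt (x, l)"
  then have "x = xstar" using kkt_sol_primal_unique[OF H_pos] xstar_kkt by blast
  moreover have "l = lamstar" using kkt_sol_multiplier_unique[OF licq] kkt xstar_kkt \<open>x = xstar\<close> by blast
  ultimately show "(x, l) = (xstar, lamstar)" by simp
qed (simp add: xstar_kkt)

lemma kkt_sol_feasible_optimal:
  assumes kkt: "kkt_sol H f A b S (x, l)" and "\<forall>i. 0 \<le> l $ i" and "x \<in> feasible A b"
  shows "(x, l) = (xstar, lamstar)"
proof -
  have "x = xstar"
    using avi_solution_unique[OF H_pos, of x "feasible A b" f xstar] kkt_sol_solves_avi[OF kkt]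
      assms(2,3) xstar_feasible xstar_avi by blast
  then show ?thesis using kkt_sol_active_set[OF kkt] kkt_sol_optimal_iff by simp
qed

lemma dr_step_unfold:
  "dr_step \<rho> H f A b sel k (z, P, \<delta>) =
    (let Ak = active_set A b (qsol z) in
     if P = Some Ak then
       (if (\<forall>i. 0 \<le> snd (sel k Ak) $ i) \<and> fst (sel k Ak) \<in> feasible A b then Inl (sel k Ak)
        else
          let zt = fst (sel k Ak); yt = qsol zt in
          if ereal (norm (yt - zt)) < \<delta>
          then Inr (dr_update yt zt, Some (active_set A b yt), ereal (norm (yt - zt)))
          else Inr (dr_update (qsol z) z, Some (active_set A b yt), \<delta>))
     else Inr (dr_update (qsol z) z, Some Ak, \<delta>))"
  unfolding dr_step_def Let_def dr_update_def R_def by (simp add: split_beta)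

lemma dr_step_Inl_optimal:
  assumes "dr_step \<rho> H f A b sel k s = Inl r"
  shows "r = (xstar, lamstar)"
proof -
  obtain z P \<delta> where s: "s = (z, P, \<delta>)" by (cases s)
  let ?Ak = "active_set A b (qsol z)"
  have "r = sel k ?Ak" and "\<forall>i. 0 \<le> snd (sel k ?Ak) $ i" and "fst (sel k ?Ak) \<in> feasible A b"
    using assms unfolding s dr_step_unfold Let_def by (auto split: if_splits)
  then show ?thesis using kkt_sol_feasible_optimal sel_kkt_sol[of "qsol z" k] by (metis prod.collapse)
qed

lemma dr_run_Inl_optimal: "dr_run \<rho> H f A b sel z0 k = Inl r \<Longrightarrow> r = (xstar, lamstar)"
proof (induction k)
  case (Suc k)
  then show ?case using dr_step_Inl_optimal by (cases "dr_run \<rho> H f A b sel z0 k") auto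
qed simp

text \<open>The threshold \<open>\<delta>\<close> only takes values \<open>residual S\<close>; evaluating the selection at
  iteration 0 loses nothing by \<open>fst_sel_eq_fst_sel_0\<close>.\<close>
definition residual :: "'m set \<Rightarrow> ereal" where
  "residual S = ereal (norm (qsol (fst (sel 0 S)) - fst (sel 0 S)))"

context
  fixes k :: nat and z z' :: "real^'n" and P P' :: "'m set option" and \<delta> \<delta>' :: ereal
  assumes step: "dr_step \<rho> H f A b sel k (z, P, \<delta>) = Inr (z', P', \<delta>')"
begin

lemma dr_step_Inr_delta:
  "(\<delta>' = \<delta> \<and> z' = dr_update (qsol z) z) \<or> (\<delta>' < \<delta> \<and> \<delta>' \<in> range residual)"
  using step fst_sel_eq_fst_sel_0[of k "qsol z"]
  unfolding dr_step_unfold Let_def residual_def by (auto split: if_splits)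

lemma dr_step_Inr_new_active_set:
  "P \<noteq> Some (active_set A b (qsol z)) \<Longrightarrow> P' = Some (active_set A b (qsol z))"
  using step unfolding dr_step_unfold Let_def by (auto split: if_splits)

lemma dr_step_Inr_repeated_active_set:
  assumes "P = Some (active_set A b (qsol z))"
  shows "active_set A b (qsol z) \<noteq> Aopt"
proof
  assume Ak: "active_set A b (qsol z) = Aopt"
  then have "sel k Aopt = (xstar, lamstar)"
    using sel_kkt_sol[of "qsol z" k] kkt_sol_optimal_iff by (metis prod.collapse)
  then show False using step assms Ak lamstar_nonneg xstar_feasible unfolding dr_step_unfold Let_def by simp
qed

end

lemma no_infinite_run:
  assumes run: "\<And>k. dr_step \<rho> H f A b sel k (z k, P k, \<delta> k) = Inr (z (Suc k), P (Suc k), \<delta> (Suc k))"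
    and "\<delta> 0 = \<infinity>"
  shows False
proof -
  note delta = dr_step_Inr_delta[OF run]
  have "\<delta> k \<in> insert \<infinity> (range residual)" for k
  proof (induction k)
    case (Suc k)
    then show ?case using delta[of k] by auto
  qed (simp add: \<open>\<delta> 0 = \<infinity>\<close>)
  then have "range \<delta> \<subseteq> insert \<infinity> (range residual)" by blast
  then have "finite (range \<delta>)" by (rule finite_subset) simp
  moreover have "decseq \<delta>"
    unfolding decseq_Suc_iff using delta by (metis order.strict_implies_order order.refl)
  ultimately obtain K where K: "\<And>k. K \<le> k \<Longrightarrow> \<delta> k = \<delta> K"
    using decseq_finite_range_eventually_const by blast
  define Z where "Z j = z (K + j)" for j
  have iter: "Z (Suc j) = dr_update (qsol (Z j)) (Z j)" for j
    using delta[of "K + j"] K[of "K + j"] K[of "Suc (K + j)"] by (auto simp: Z_def)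
  have "\<forall>\<^sub>F j in sequentially. active_set A b (qsol (Z j)) = Aopt"
    by (rule active_set_identified[OF dr_update_converges[of Z, OF iter]])
  then obtain N where N: "\<And>j. N \<le> j \<Longrightarrow> active_set A b (qsol (z (K + j))) = Aopt"
    unfolding eventually_sequentially Z_def by blast
  show False
  proof (cases "P (K + N) = Some (active_set A b (qsol (z (K + N))))")
    case True
    then show False using dr_step_Inr_repeated_active_set[OF run] N[of N] by blast
  next
    case False
    then have "P (Suc (K + N)) = Some Aopt" using dr_step_Inr_new_active_set[OF run] N[of N] by simp
    then show False using dr_step_Inr_repeated_active_set[OF run[of "Suc (K + N)"]] N[of "Suc N"] by simp
  qed
qed

lemma dr_run_terminates: "\<exists>k. dr_run \<rho> H f A b sel z0 k = Inl (xstar, lamstar)"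
proof (cases "\<exists>k r. dr_run \<rho> H f A b sel z0 k = Inl r")
  case True
  then show ?thesis using dr_run_Inl_optimal by blast
next
  case False
  define s where "s k = projr (dr_run \<rho> H f A b sel z0 k)" for k
  have run: "dr_run \<rho> H f A b sel z0 k = Inr (s k)" for k
    using False by (cases "dr_run \<rho> H f A b sel z0 k") (auto simp: s_def)
  have "dr_step \<rho> H f A b sel k (fst (s k), fst (snd (s k)), snd (snd (s k)))
          = Inr (fst (s (Suc k)), fst (snd (s (Suc k))), snd (snd (s (Suc k))))" for k
    using run[of "Suc k"] run[of k] by simp
  moreover have "snd (snd (s 0)) = \<infinity>" using run[of 0] by (metis dr_run.simps(1) sum.inject(2) snd_conv)
  ultimately have False
    by (rule no_infinite_run[where z = "\<lambda>k. fst (s k)" and P = "\<lambda>k. fst (snd (s k))"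
          and \<delta> = "\<lambda>k. snd (snd (s k))"])
  then show ?thesis ..
qed

end

theorem theorem2:
  fixes H :: "real^'n^'n" and f :: "real^'n" and A :: "real^'n^'m" and b :: "real^'m"
    and \<rho> :: real and z0 :: "real^'n"
    and xstar :: "real^'n" and lamstar :: "real^'m"
    and sel :: "nat \<Rightarrow> 'm set \<Rightarrow> (real^'n) \<times> (real^'m)"
  assumes nonempty: "feasible A b \<noteq> {}"
    and pd: "\<forall>x. x \<noteq> 0 \<longrightarrow> x \<bullet> ((H + transpose H) *v x) > 0"
    and rho: "\<rho> > 0"
    and avi: "xstar \<in> feasible A b"
        "\<forall>y\<in>feasible A b. (H *v xstar + f) \<bullet> (y - xstar) \<ge> 0"
    and licq: "\<forall>c. (\<Sum>i\<in>active_set A b xstar. c i *\<^sub>R (A $ i)) = 0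
                  \<longrightarrow> (\<forall>i\<in>active_set A b xstar. c i = 0)"
    and kkt: "H *v xstar + f + transpose A *v lamstar = 0"
        "\<forall>i. lamstar $ i \<ge> 0"
        "\<forall>i. lamstar $ i * (b $ i - (A $ i) \<bullet> xstar) = 0"
    and strict: "\<forall>i\<in>active_set A b xstar. lamstar $ i > 0"
    and sel: "\<And>k S. (\<exists>p. kkt_sol H f A b S p) \<Longrightarrow> kkt_sol H f A b S (sel k S)"
  shows "\<exists>k. dr_run \<rho> H f A b sel z0 k = Inl (xstar, lamstar)"
proof -
  \<comment> \<open>\<open>nonempty\<close> is redundant: it follows from \<open>avi(1)\<close>.\<close>
  have "kkt_sol H f A b (active_set A b xstar) (xstar, lamstar)"
    using kkt(1,3) by (rule kkt_sol_active_set_if_complementary)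
  moreover have "rows_independent A (active_set A b xstar)"
    using licq unfolding rows_independent_def .
  ultimately interpret dr_daqp_setting H f A b \<rho> xstar lamstar sel
    using pd rho avi kkt(2) strict sel by unfold_locales auto
  show ?thesis by (rule dr_run_terminates)
qed

end
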